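(* Let $0<c<1$, $\beta_1,\dots,\beta_p>0$ with $\beta_i-\beta_j\notin\mathbb Z$ ($i\ne j$), $\vec n\in\mathbb N_0^p$. Let $\mathcal C$ be a positively oriented (counterclockwise) Hankel-type contour that starts and ends at $-\infty$ and encircles the half-line $(-\infty,0]$ exactly once. Then for $x\in\mathbb N_0$ $$M^{(\mathrm{II})}_{2:\vec n}(x;\vec\beta,c)=\Big(\frac{c}{c-1}\Big)^{|\vec n|}\frac{\Gamma(x+1)}{c^x}\int_{\mathcal C}\frac{\Gamma(s)}{(1-c)^s}\frac{\prod_{j=1}^p(\beta_j-s)_{n_j}}{\Gamma(x+s+1)}\frac{ds}{2\pi i}.$$
   Context: Weights $w_i(x)=\frac{\Gamma(\beta_i+x)}{\Gamma(\beta_i)\Gamma(x+1)}c^x$ on $\mathbb N_0$. $M^{(\mathrm{II})}_{2:\vec n}$ is the monic polynomial of degree $|\vec n|$ with $\sum_{k\ge0}k^jM^{(\mathrm{II})}_{2:\vec n}(k)w_i(k)=0$ for $0\le j\le n_i-1$, $1\le i\le p$. $(a)_m$ is the Pochhammer symbol. *)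

theory Defs
  imports "HOL-Complex_Analysis.Complex_Analysis" "HOL-Computational_Algebra.Polynomial"
begin

definition meixner2_weight :: "real \<Rightarrow> real \<Rightarrow> nat \<Rightarrow> real" where
  "meixner2_weight b c k = Gamma (b + real k) / (Gamma b * Gamma (real k + 1)) * c ^ k"

definition is_meixner2_typeII ::
    "nat \<Rightarrow> (nat \<Rightarrow> real) \<Rightarrow> real \<Rightarrow> (nat \<Rightarrow> nat) \<Rightarrow> real poly \<Rightarrow> bool" where
  "is_meixner2_typeII p \<beta> c n P \<longleftrightarrow>
     degree P = (\<Sum>i<p. n i) \<and> lead_coeff P = 1 \<and>
     (\<forall>i<p. \<forall>j<n i.
        (\<lambda>k. real k ^ j * poly P (real k) * meixner2_weight (\<beta> i) c k) sums 0)"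

definition hankel_piece :: "(real \<Rightarrow> complex) \<Rightarrow> real \<Rightarrow> real \<Rightarrow> complex" where
  "hankel_piece \<gamma> T = (\<lambda>u. \<gamma> ((2 * u - 1) * T))"

text \<open>Positively oriented Hankel-type contour: starts (t \<rightarrow> -\<infinity>) and ends (t \<rightarrow> +\<infinity>) at
  Re s = -\<infinity> within a horizontal strip, piecewise smooth, avoids (-\<infinity>,0], and encircles
  every point of (-\<infinity>,0] exactly once counterclockwise (the truncated contour closed
  by the segment from its end point back to its start point eventually has winding
  number 1 around each such point).\<close>
definition hankel_contour :: "(real \<Rightarrow> complex) \<Rightarrow> bool" where
  "hankel_contour \<gamma> \<longleftrightarrow>
     (\<forall>T>0. valid_path (hankel_piece \<gamma> T)) \<and>
     (\<forall>t. \<gamma> t \<notin> complex_of_real ` {..0}) \<and>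
     filterlim (\<lambda>t. Re (\<gamma> t)) at_bot at_top \<and>
     filterlim (\<lambda>t. Re (\<gamma> t)) at_bot at_bot \<and>
     bounded (range (\<lambda>t. Im (\<gamma> t))) \<and>
     (\<forall>z::real. z \<le> 0 \<longrightarrow>
        eventually (\<lambda>T. winding_number (hankel_piece \<gamma> T +++ linepath (\<gamma> T) (\<gamma> (-T)))
                         (complex_of_real z) = 1) at_top)"

end

theory Submission
  imports Defs "HOL-Real_Asymp.Real_Asymp"
begin

text \<open>Both sides are reduced to the same finite binomial sum.
  Expanding \<open>P\<close> in falling factorials \<open>(y)_m\<close>, the \<open>w_b\<close>-moment of \<open>P\<close> becomes
  \<open>(1-c)^-b \<Phi>(b)\<close> with \<open>\<Phi>(b) = \<Sum>_m d_m (c/(1-c))^m (b)_m\<close>, a polynomial of degree \<open>|n|\<close> in \<open>b\<close>.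
  Orthogonality makes the \<open>|n|\<close> numbers \<open>\<beta>_i + j\<close> (\<open>j < n_i\<close>), distinct because
  \<open>\<beta>_i - \<beta>_j \<notin> \<int>\<close>, roots of \<open>\<Phi>\<close>, so \<open>\<Phi>\<close> factors completely. Evaluating at \<open>b = -k\<close>
  and summing against binomial weights inverts the expansion:
  \<open>P(x) = (c/(c-1))^|n| c^-x \<Sum>_k C(x,k) (c-1)^k \<Prod>_j (\<beta>_j + k)_(n_j)\<close>.
  On the analytic side \<open>\<Gamma>(s)/\<Gamma>(x+s+1) = 1/(s)_(x+1)\<close>, so the integrand has simple poles only
  at \<open>0, -1, \<dots>, -x\<close> and, as \<open>0 < 1 - c < 1\<close>, decays exponentially to the left. The residue
  theorem on the truncated contour closed by a chord far to the left therefore yields \<open>2\<pi>i\<close>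
  times the sum of the residues, which is the same binomial sum divided by \<open>x!\<close>.\<close>

section \<open>Falling factorials and Pochhammer sums\<close>

definition linear_factors :: "(nat \<Rightarrow> real) \<Rightarrow> nat \<Rightarrow> real poly" where
  "linear_factors a m = (\<Prod>l<m. [:a l, 1:])"

lemma poly_linear_factors: "poly (linear_factors a m) y = (\<Prod>l<m. a l + y)"
  unfolding linear_factors_def by (simp add: poly_prod)

lemma degree_linear_factors: "degree (linear_factors a m) = m"
  unfolding linear_factors_def by (subst degree_prod_eq_sum_degree) auto

lemma coeff_linear_factors_degree: "coeff (linear_factors a m) m = 1"
proof -
  have "lead_coeff (linear_factors a m) = 1"
    unfolding linear_factors_def by (simp add: lead_coeff_prod)
  then show ?thesis by (simp add: degree_linear_factors)
qed

lemma coeff_linear_factors_above: "m < i \<Longrightarrow> coeff (linear_factors a m) i = 0"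
  by (simp add: coeff_eq_0 degree_linear_factors)

lemma poly_linear_factors_pochhammer:
  "poly (linear_factors (\<lambda>l. b + real l) m) y = pochhammer (b + y) m"
  by (simp add: poly_linear_factors pochhammer_prod atLeast0LessThan algebra_simps)

definition falling_fact :: "real \<Rightarrow> nat \<Rightarrow> real" where
  "falling_fact y m = (\<Prod>l<m. y - real l)"

lemma falling_fact_Suc: "falling_fact y (Suc m) = falling_fact y m * (y - real m)"
  by (simp add: falling_fact_def)

lemma falling_fact_of_nat:
  "falling_fact (real k) m = (if m \<le> k then fact k / fact (k - m) else 0)"
proof (induction m)
  case 0
  then show ?case by (simp add: falling_fact_def)
next
  case (Suc m)
  show ?case
  proof (cases "Suc m \<le> k")
    case True
    then have k: "k - m = Suc (k - Suc m)" by simp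
    have f: "fact (k - m) = real (k - m) * (fact (k - Suc m) :: real)"
      by (subst k, simp only: fact_Suc) (simp add: k[symmetric])
    have pos: "real (k - m) > 0" using True by simp
    have "falling_fact (real k) (Suc m) = fact k / fact (k - m) * real (k - m)"
      using Suc.IH True by (simp add: falling_fact_Suc of_nat_diff)
    also have "\<dots> = fact k / fact (k - Suc m)"
      unfolding f using pos by simp
    finally show ?thesis using True by simp
  next
    case False
    then show ?thesis using Suc by (cases "m = k") (auto simp: falling_fact_Suc)
  qed
qed

lemma pochhammer_neg_of_nat: "pochhammer (- real k) m = (-1) ^ m * falling_fact (real k) m"
  by (induction m) (auto simp: pochhammer_Suc falling_fact_Suc falling_fact_def algebra_simps)

lemma poly_falling_fact_expansion:
  fixes Q :: "real poly"
  assumes "degree Q \<le> N"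
  shows "\<exists>d. (\<forall>y. poly Q y = (\<Sum>m\<le>N. d m * falling_fact y m)) \<and> d N = coeff Q N"
  using assms
proof (induction N arbitrary: Q)
  case 0
  then have "\<And>y. poly Q y = coeff Q 0" by (simp add: poly_altdef)
  then show ?case by (intro exI[of _ "\<lambda>_. coeff Q 0"]) (simp add: falling_fact_def)
next
  case (Suc N)
  define L where "L = linear_factors (\<lambda>l. - real l) (Suc N)"
  define Q' where "Q' = Q - smult (coeff Q (Suc N)) L"
  have "degree Q' \<le> N"
  proof (rule degree_le, intro allI impI)
    fix i assume "N < i"
    then consider "i = Suc N" | "Suc N < i" by linarith
    then show "coeff Q' i = 0"
      by cases (use Suc.prems in \<open>auto simp: Q'_def L_def coeff_linear_factors_degree
                                   coeff_linear_factors_above coeff_eq_0\<close>)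
  qed
  then obtain d where d: "\<forall>y. poly Q' y = (\<Sum>m\<le>N. d m * falling_fact y m)"
    using Suc.IH by blast
  have "poly Q y = (\<Sum>m\<le>Suc N. (d(Suc N := coeff Q (Suc N))) m * falling_fact y m)" for y
  proof -
    have "poly L y = falling_fact y (Suc N)"
      by (simp add: L_def poly_linear_factors falling_fact_def)
    then show ?thesis using d[rule_format, of y] by (simp add: Q'_def algebra_simps)
  qed
  then show ?case by (intro exI[of _ "d(Suc N := coeff Q (Suc N))"]) simp
qed

lemma binomial_falling_fact_sum:
  "(\<Sum>k\<le>x. real (x choose k) * z ^ k * falling_fact (real k) m)
     = falling_fact (real x) m * z ^ m * (1 + z) ^ (x - m)"
proof (cases "m \<le> x")
  case False
  then show ?thesis by (auto simp: falling_fact_of_nat intro!: sum.neutral)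
next
  case True
  have split: "{..x} = {..<m} \<union> {m..x}" using True by auto
  have "(\<Sum>k\<le>x. real (x choose k) * z ^ k * falling_fact (real k) m)
      = (\<Sum>k\<in>{m..x}. real (x choose k) * z ^ k * falling_fact (real k) m)"
    unfolding split by (subst sum.union_disjoint) (auto simp: falling_fact_of_nat intro!: sum.neutral)
  also have "\<dots> = (\<Sum>l=0..x-m. real (x choose (l + m)) * z ^ (l + m) * falling_fact (real (l + m)) m)"
    using sum.shift_bounds_cl_nat_ivl[of "\<lambda>k. real (x choose k) * z ^ k * falling_fact (real k) m"
        0 m "x - m"] True
    by simp
  also have "\<dots> = (\<Sum>l=0..x-m. fact x / fact (x - m) * z ^ m * (real ((x - m) choose l) * z ^ l))"
  proof (rule sum.cong[OF refl])
    fix l assume "l \<in> {0..x-m}"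
    then have l: "l + m \<le> x" "l \<le> x - m" "x - (l + m) = x - m - l" using True by auto
    have "falling_fact (real (l + m)) m = fact (l + m) / fact l"
      by (simp add: falling_fact_of_nat del: of_nat_add)
    moreover have "(fact (l + m) :: real) \<noteq> 0" "(fact (x - m) :: real) \<noteq> 0" by simp_all
    ultimately show "real (x choose (l + m)) * z ^ (l + m) * falling_fact (real (l + m)) m
        = fact x / fact (x - m) * z ^ m * (real ((x - m) choose l) * z ^ l)"
      using l by (simp add: binomial_fact power_add field_simps del: of_nat_add)
  qed
  also have "\<dots> = fact x / fact (x - m) * z ^ m * (z + 1) ^ (x - m)"
    by (simp add: binomial_ring atLeast0AtMost sum_distrib_left)
  finally show ?thesis using True by (simp add: falling_fact_of_nat add.commute)
qed

lemma poly_eqI_common_roots: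
  fixes F G :: "real poly"
  assumes "degree F \<le> N" "degree G \<le> N" "coeff F N = coeff G N"
    and "finite T" "card T = N" "\<forall>t\<in>T. poly F t = 0 \<and> poly G t = 0"
  shows "F = G"
proof (rule ccontr)
  assume "F \<noteq> G"
  then have D: "F - G \<noteq> 0" by simp
  have "degree (F - G) \<le> N" "coeff (F - G) N = 0"
    using assms(1-3) degree_diff_le by auto
  then have "degree (F - G) < N"
    using D by (metis le_neq_implies_less leading_coeff_0_iff)
  moreover have "card T \<le> degree (F - G)"
  proof -
    have "T \<subseteq> {t. poly (F - G) t = 0}" using assms(6) by auto
    then have "card T \<le> card {t. poly (F - G) t = 0}"
      by (rule card_mono[OF poly_roots_finite[OF D]])
    also have "\<dots> \<le> degree (F - G)" by (rule card_poly_roots_bound[OF D])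
    finally show ?thesis .
  qed
  ultimately show False using assms(5) by simp
qed

lemma pochhammer_sum_eq_prod_roots:
  fixes a :: "nat \<Rightarrow> real"
  assumes T: "finite T" "card T = N" and roots: "\<forall>t\<in>T. (\<Sum>m\<le>N. a m * pochhammer t m) = 0"
  shows "(\<Sum>m\<le>N. a m * pochhammer y m) = a N * (\<Prod>t\<in>T. y - t)"
proof -
  define F where "F = (\<Sum>m\<le>N. smult (a m) (linear_factors real m))"
  define G where "G = smult (a N) (\<Prod>t\<in>T. [:- t, 1:])"
  have poly_F: "poly F y = (\<Sum>m\<le>N. a m * pochhammer y m)" for y
    using poly_linear_factors_pochhammer[of 0] by (simp add: F_def poly_sum)
  have poly_G: "poly G y = a N * (\<Prod>t\<in>T. y - t)" for y
    by (simp add: G_def poly_prod)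
  have degree_prod: "degree (\<Prod>t\<in>T. [:- t, 1:]) = N"
    using T by (simp add: degree_prod_eq_sum_degree)
  have "F = G"
  proof (rule poly_eqI_common_roots[OF _ _ _ T])
    show "degree F \<le> N"
    proof (rule degree_le, intro allI impI)
      fix i assume "N < i"
      then have "\<forall>m\<le>N. coeff (linear_factors real m) i = 0"
        by (simp add: coeff_linear_factors_above)
      then show "coeff F i = 0" by (simp add: F_def coeff_sum)
    qed
    show "degree G \<le> N" using degree_prod by (simp add: G_def)
    have "coeff F N = (\<Sum>m<N. a m * coeff (linear_factors real m) N) + a N"
      by (simp add: F_def coeff_sum coeff_linear_factors_degree flip: lessThan_Suc_atMost)
    also have "(\<Sum>m<N. a m * coeff (linear_factors real m) N) = 0"
      by (intro sum.neutral) (simp add: coeff_linear_factors_above)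
    also have "a N = coeff G N"
      using degree_prod lead_coeff_prod[of "\<lambda>t. [:- t, 1:]" T] by (simp add: G_def)
    finally show "coeff F N = coeff G N" by simp
    show "\<forall>t\<in>T. poly F t = 0 \<and> poly G t = 0"
      using roots T(1) by (simp add: poly_F poly_G prod_zero_iff)
  qed
  then show ?thesis by (simp flip: poly_F poly_G)
qed

section \<open>Moments of the Meixner weights and the explicit formula\<close>

lemma meixner2_weight_pochhammer:
  assumes "b > 0"
  shows "meixner2_weight b c k = pochhammer b k / fact k * c ^ k"
proof -
  have "b \<notin> \<int>\<^sub>\<le>\<^sub>0" using assms nonpos_Ints_nonpos by force
  then have "pochhammer b k = Gamma (b + real k) / Gamma b" by (simp add: pochhammer_Gamma)
  moreover have "Gamma (real k + 1) = fact k" using Gamma_fact[of k] by (simp add: add.commute)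
  ultimately show ?thesis by (simp add: meixner2_weight_def)
qed

lemma meixner2_weight_falling_fact_sums:
  assumes b: "0 < b" and c: "0 < c" "c < 1"
  shows "(\<lambda>k. meixner2_weight b c k * falling_fact (real k) m) sums
           (c ^ m * pochhammer b m * (1 - c) powr (-(b + real m)))"
proof -
  have "(\<lambda>l. ((-(b + real m)) gchoose l) * (- c) ^ l) sums (1 + - c) powr (-(b + real m))"
    by (rule gen_binomial_real) (use c in auto)
  moreover have "((-(b + real m)) gchoose l) * (- c) ^ l = pochhammer (b + real m) l / fact l * c ^ l" for l
  proof -
    have g: "((-(b + real m)) gchoose l) = (-1) ^ l * pochhammer (b + real m) l / fact l"
      by (simp add: gbinomial_pochhammer add.commute)
    have "(-1::real) ^ l * (-1) ^ l = 1" by (simp flip: power_add)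
    then show ?thesis unfolding g power_minus[of c] by (simp add: algebra_simps)
  qed
  ultimately have binomial_series:
    "(\<lambda>l. pochhammer (b + real m) l / fact l * c ^ l) sums (1 - c) powr (-(b + real m))"
    by simp
  define f where "f k = meixner2_weight b c k * falling_fact (real k) m" for k
  have "f (l + m) = c ^ m * pochhammer b m * (pochhammer (b + real m) l / fact l * c ^ l)" for l
  proof -
    have "pochhammer b (l + m) = pochhammer b m * pochhammer (b + real m) l"
      using pochhammer_product[of m "l + m" b] by simp
    moreover have "falling_fact (real (l + m)) m = fact (l + m) / fact l"
      by (simp add: falling_fact_of_nat del: of_nat_add)
    moreover have "(fact (l + m) :: real) \<noteq> 0" by simp
    ultimately show ?thesis using b
      by (simp add: f_def meixner2_weight_pochhammer power_add field_simps del: of_nat_add)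
  qed
  then have "(\<lambda>l. f (l + m)) sums (c ^ m * pochhammer b m * (1 - c) powr (-(b + real m)))"
    using sums_mult[OF binomial_series] by simp
  moreover have "f i = 0" if "i < m" for i
    using that by (simp add: f_def falling_fact_of_nat)
  ultimately show ?thesis
    using sums_zero_iff_shift[of m f] by (simp add: f_def)
qed

lemma meixner2_weight_poly_sums:
  assumes P: "\<forall>y. poly P y = (\<Sum>m\<le>N. d m * falling_fact y m)" and b: "0 < b" and c: "0 < c" "c < 1"
  shows "(\<lambda>k. meixner2_weight b c k * poly P (real k)) sums
           ((1 - c) powr (-b) * (\<Sum>m\<le>N. d m * (c / (1 - c)) ^ m * pochhammer b m))"
proof -
  have "(\<lambda>k. \<Sum>m\<le>N. d m * (meixner2_weight b c k * falling_fact (real k) m)) sums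
        (\<Sum>m\<le>N. d m * (c ^ m * pochhammer b m * (1 - c) powr (-(b + real m))))"
    by (intro sums_sum sums_mult meixner2_weight_falling_fact_sums b c)
  moreover have "(\<Sum>m\<le>N. d m * (meixner2_weight b c k * falling_fact (real k) m))
      = meixner2_weight b c k * poly P (real k)" for k
    using P by (simp add: sum_distrib_left mult_ac)
  moreover have "c ^ m * (1 - c) powr (-(b + real m)) = (1 - c) powr (-b) * (c / (1 - c)) ^ m" for m
  proof -
    have "(1 - c) powr (-(b + real m)) = (1 - c) powr (-b) * (1 - c) powr (- real m)"
      by (simp add: powr_add[symmetric])
    moreover have "(1 - c) powr (- real m) = 1 / (1 - c) ^ m"
      using c by (simp add: powr_minus_divide powr_realpow)
    ultimately show ?thesis by (simp add: power_divide)
  qed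
  ultimately show ?thesis by (simp add: sum_distrib_left mult_ac)
qed

text \<open>Orthogonality against \<open>k^j\<close>, \<open>j < n\<close>, is orthogonality against \<open>(b+k)_j\<close>, and
  \<open>(b)_k (b+k)_j = (b)_j (b+j)_k\<close> turns \<open>(b+k)_j w_b(k)\<close> into a multiple of \<open>w_(b+j)(k)\<close>.\<close>
lemma meixner2_orthogonal_shifted_weight:
  assumes orth: "\<forall>j'<r. (\<lambda>k. real k ^ j' * poly P (real k) * meixner2_weight b c k) sums 0"
    and j: "j < r" and b: "0 < b"
  shows "(\<lambda>k. meixner2_weight (b + real j) c k * poly P (real k)) sums 0"
proof -
  define q where "q = linear_factors (\<lambda>l. b + real l) j"
  have "(\<lambda>k. \<Sum>l\<le>j. coeff q l * (real k ^ l * poly P (real k) * meixner2_weight b c k)) sums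
          (\<Sum>l\<le>j. coeff q l * 0)"
    using orth j by (intro sums_sum sums_mult) auto
  moreover have "(\<Sum>l\<le>j. coeff q l * (real k ^ l * poly P (real k) * meixner2_weight b c k))
       = poly q (real k) * poly P (real k) * meixner2_weight b c k" for k
    unfolding poly_altdef[of q] by (simp add: q_def degree_linear_factors sum_distrib_left mult_ac)
  moreover have "poly q (real k) * poly P (real k) * meixner2_weight b c k =
      pochhammer b j * (meixner2_weight (b + real j) c k * poly P (real k))" for k
  proof -
    have "pochhammer b k * pochhammer (b + real k) j = pochhammer b j * pochhammer (b + real j) k"
      using pochhammer_product[of k "k + j" b] pochhammer_product[of j "k + j" b]
      by (simp add: add.commute)
    moreover have "b + real j > 0" using b by simp
    ultimately show ?thesis
      using b by (simp add: q_def poly_linear_factors_pochhammer meixner2_weight_pochhammer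
          field_simps)
  qed
  ultimately have "(\<lambda>k. pochhammer b j * (meixner2_weight (b + real j) c k * poly P (real k))) sums 0"
    by simp
  moreover have "pochhammer b j > 0" using b by (rule pochhammer_pos)
  ultimately show ?thesis
    using sums_mult_iff[of "pochhammer b j" _ 0] by simp
qed

lemma inj_on_shifted_parameters:
  assumes "\<And>i j. i < p \<Longrightarrow> j < p \<Longrightarrow> i \<noteq> j \<Longrightarrow> \<beta> i - \<beta> j \<notin> \<int>"
  shows "inj_on (\<lambda>(i, j). \<beta> i + real j) (SIGMA i:{..<p}. {..<n i})"
proof (rule inj_onI, clarsimp)
  fix i j i' j'
  assume i: "i < p" "i' < p" and eq: "\<beta> i + real j = \<beta> i' + real j'"
  then have "\<beta> i - \<beta> i' = of_int (int j' - int j)" by simp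
  then have "\<beta> i - \<beta> i' \<in> \<int>" by (metis Ints_of_int)
  then have "i = i'" using assms i by blast
  with eq show "i = i' \<and> j = j'" by simp
qed

lemma meixner2_falling_fact_coeffs_root:
  fixes d :: "nat \<Rightarrow> real"
  assumes c: "0 < c" "c < 1" and b: "b > 0"
    and orth: "\<forall>j'<r. (\<lambda>k. real k ^ j' * poly P (real k) * meixner2_weight b c k) sums 0"
    and j: "j < r"
    and d: "\<forall>y. poly P y = (\<Sum>m\<le>N. d m * falling_fact y m)"
  shows "(\<Sum>m\<le>N. d m * (c / (1 - c)) ^ m * pochhammer (b + real j) m) = 0"
proof -
  have "b + real j > 0" using b by simp
  have "(\<lambda>k. meixner2_weight (b + real j) c k * poly P (real k)) sums 0"
    by (rule meixner2_orthogonal_shifted_weight[OF orth j b])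
  moreover have "(\<lambda>k. meixner2_weight (b + real j) c k * poly P (real k)) sums
      ((1 - c) powr (- (b + real j)) * (\<Sum>m\<le>N. d m * (c / (1 - c)) ^ m * pochhammer (b + real j) m))"
    by (rule meixner2_weight_poly_sums[OF d \<open>b + real j > 0\<close> c])
  ultimately show ?thesis using sums_unique2 c by fastforce
qed

lemma meixner2_falling_fact_coeffs_factor:
  fixes d :: "nat \<Rightarrow> real"
  assumes c: "0 < c" "c < 1"
    and \<beta>pos: "\<And>i. i < p \<Longrightarrow> \<beta> i > 0"
    and \<beta>nonint: "\<And>i j. i < p \<Longrightarrow> j < p \<Longrightarrow> i \<noteq> j \<Longrightarrow> \<beta> i - \<beta> j \<notin> \<int>"
    and P: "is_meixner2_typeII p \<beta> c n P"
    and d: "\<forall>y. poly P y = (\<Sum>m\<le>(\<Sum>i<p. n i). d m * falling_fact y m)"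
    and dN: "d (\<Sum>i<p. n i) = 1"
  shows "(\<Sum>m\<le>(\<Sum>i<p. n i). d m * (c / (1 - c)) ^ m * pochhammer y m)
           = (c / (1 - c)) ^ (\<Sum>i<p. n i) * (\<Prod>i<p. \<Prod>j<n i. y - (\<beta> i + real j))"
proof -
  define S where "S = (SIGMA i:{..<p}. {..<n i})"
  define h where "h = (\<lambda>(i, j). \<beta> i + real j)"
  have inj: "inj_on h S"
    unfolding h_def S_def by (rule inj_on_shifted_parameters[OF \<beta>nonint])
  have "(\<Sum>m\<le>(\<Sum>i<p. n i). d m * (c / (1 - c)) ^ m * pochhammer y m)
      = d (\<Sum>i<p. n i) * (c / (1 - c)) ^ (\<Sum>i<p. n i) * (\<Prod>t\<in>h ` S. y - t)"
  proof (rule pochhammer_sum_eq_prod_roots[where a = "\<lambda>m. d m * (c / (1 - c)) ^ m"])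
    show "finite (h ` S)" "card (h ` S) = (\<Sum>i<p. n i)"
      using card_image[OF inj] by (simp_all add: S_def card_SigmaI)
    show "\<forall>t\<in>h ` S. (\<Sum>m\<le>(\<Sum>i<p. n i). d m * (c / (1 - c)) ^ m * pochhammer t m) = 0"
    proof
      fix t assume "t \<in> h ` S"
      then obtain i j where ij: "i < p" "j < n i" "t = \<beta> i + real j" by (auto simp: S_def h_def)
      have "\<forall>j'<n i. (\<lambda>k. real k ^ j' * poly P (real k) * meixner2_weight (\<beta> i) c k) sums 0"
        using P ij(1) by (simp add: is_meixner2_typeII_def)
      from meixner2_falling_fact_coeffs_root[OF c \<beta>pos[OF ij(1)] this ij(2) d]
      show "(\<Sum>m\<le>(\<Sum>i<p. n i). d m * (c / (1 - c)) ^ m * pochhammer t m) = 0"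
        by (simp add: ij(3))
    qed
  qed
  also have "(\<Prod>t\<in>h ` S. y - t) = (\<Prod>(i, j)\<in>S. y - h (i, j))"
    unfolding prod.reindex[OF inj] by (simp add: case_prod_unfold)
  also have "\<dots> = (\<Prod>i<p. \<Prod>j<n i. y - (\<beta> i + real j))"
    unfolding S_def by (subst prod.Sigma[symmetric]) (auto simp: h_def)
  finally show ?thesis using dN by simp
qed

lemma meixner2_falling_fact_coeffs_at_neg:
  fixes d :: "nat \<Rightarrow> real"
  assumes c: "0 < c" "c < 1"
    and \<beta>pos: "\<And>i. i < p \<Longrightarrow> \<beta> i > 0"
    and \<beta>nonint: "\<And>i j. i < p \<Longrightarrow> j < p \<Longrightarrow> i \<noteq> j \<Longrightarrow> \<beta> i - \<beta> j \<notin> \<int>"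
    and P: "is_meixner2_typeII p \<beta> c n P"
    and d: "\<forall>y. poly P y = (\<Sum>m\<le>(\<Sum>i<p. n i). d m * falling_fact y m)"
    and dN: "d (\<Sum>i<p. n i) = 1"
  shows "(c / (c - 1)) ^ (\<Sum>i<p. n i) * (\<Prod>j<p. pochhammer (\<beta> j + real k) (n j))
           = (\<Sum>m\<le>(\<Sum>i<p. n i). d m * (c / (c - 1)) ^ m * falling_fact (real k) m)"
proof -
  have "(\<Prod>i<p. \<Prod>j<n i. - real k - (\<beta> i + real j))
      = (\<Prod>i<p. (-1) ^ n i * pochhammer (\<beta> i + real k) (n i))"
  proof (intro prod.cong refl)
    fix i
    have "(\<Prod>j<n i. - real k - (\<beta> i + real j)) = (\<Prod>j<n i. - (\<beta> i + real k + real j))"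
      by (intro prod.cong refl) (simp add: algebra_simps)
    also have "\<dots> = (-1) ^ n i * (\<Prod>j<n i. \<beta> i + real k + real j)"
      by (simp only: prod_uminus card_lessThan)
    finally show "(\<Prod>j<n i. - real k - (\<beta> i + real j)) = (-1) ^ n i * pochhammer (\<beta> i + real k) (n i)"
      by (simp add: pochhammer_prod atLeast0LessThan)
  qed
  also have "\<dots> = (-1) ^ (\<Sum>i<p. n i) * (\<Prod>j<p. pochhammer (\<beta> j + real k) (n j))"
    by (simp add: prod.distrib power_sum)
  moreover have "c / (c - 1) = - (c / (1 - c))" using c by (simp add: field_simps)
  ultimately show ?thesis
    using meixner2_falling_fact_coeffs_factor[OF c \<beta>pos \<beta>nonint P d dN, of "- real k"]
    by (simp add: pochhammer_neg_of_nat power_minus[of "c / (1 - c)"] mult_ac)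
qed

lemma meixner2_typeII_explicit:
  assumes c: "0 < c" "c < 1"
    and \<beta>pos: "\<And>i. i < p \<Longrightarrow> \<beta> i > 0"
    and \<beta>nonint: "\<And>i j. i < p \<Longrightarrow> j < p \<Longrightarrow> i \<noteq> j \<Longrightarrow> \<beta> i - \<beta> j \<notin> \<int>"
    and P: "is_meixner2_typeII p \<beta> c n P"
  shows "poly P (real x) = (c / (c - 1)) ^ (\<Sum>i<p. n i) / c ^ x *
     (\<Sum>k\<le>x. real (x choose k) * (c - 1) ^ k * (\<Prod>j<p. pochhammer (\<beta> j + real k) (n j)))"
proof -
  define N where "N = (\<Sum>i<p. n i)"
  define q where "q = c / (c - 1)"
  define Q where "Q k = (\<Prod>j<p. pochhammer (\<beta> j + real k) (n j))" for k :: nat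
  have "degree P = N" "lead_coeff P = 1" using P by (auto simp: is_meixner2_typeII_def N_def)
  then obtain d where d: "\<forall>y. poly P y = (\<Sum>m\<le>N. d m * falling_fact y m)" and dN: "d N = 1"
    using poly_falling_fact_expansion[of P N] by auto
  have "q ^ N * (\<Sum>k\<le>x. real (x choose k) * (c - 1) ^ k * Q k)
      = (\<Sum>k\<le>x. \<Sum>m\<le>N. d m * q ^ m * (real (x choose k) * (c - 1) ^ k * falling_fact (real k) m))"
    using meixner2_falling_fact_coeffs_at_neg[OF c \<beta>pos \<beta>nonint P d[unfolded N_def] dN[unfolded N_def]]
    by (simp add: N_def q_def Q_def sum_distrib_left mult_ac)
  also have "\<dots> = (\<Sum>m\<le>N. d m * q ^ m *
                      (\<Sum>k\<le>x. real (x choose k) * (c - 1) ^ k * falling_fact (real k) m))"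
    by (subst sum.swap) (simp add: sum_distrib_left)
  also have "\<dots> = (\<Sum>m\<le>N. d m * falling_fact (real x) m * c ^ x)"
  proof (intro sum.cong refl)
    fix m
    have "(\<Sum>k\<le>x. real (x choose k) * (c - 1) ^ k * falling_fact (real k) m)
        = falling_fact (real x) m * ((c - 1) / c) ^ m * c ^ x"
      using binomial_falling_fact_sum[of x "c - 1" m] c
      by (cases "m \<le> x") (simp_all add: falling_fact_of_nat power_diff power_divide)
    moreover have "q * ((c - 1) / c) = 1" using c by (simp add: q_def)
    ultimately show "d m * q ^ m * (\<Sum>k\<le>x. real (x choose k) * (c - 1) ^ k * falling_fact (real k) m)
        = d m * falling_fact (real x) m * c ^ x"
      by (simp add: power_mult_distrib[symmetric])
  qed
  also have "\<dots> = c ^ x * poly P (real x)"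
    using d by (simp add: sum_distrib_left mult_ac)
  finally show ?thesis
    using c by (simp add: N_def q_def Q_def field_simps)
qed

section \<open>Integrals over Hankel contours\<close>

lemma has_integral_exp_affine:
  fixes \<mu> A B :: real
  assumes "\<mu> > 0"
  shows "((\<lambda>t. exp (\<mu> * (A + t * (B - A))) * \<bar>B - A\<bar>) has_integral
            \<bar>exp (\<mu> * B) - exp (\<mu> * A)\<bar> / \<mu>) {0..1}"
proof (cases "B = A")
  case True
  then show ?thesis by simp
next
  case False
  define F where "F t = exp (\<mu> * (A + t * (B - A))) * \<bar>B - A\<bar> / (\<mu> * (B - A))" for t
  have "(F has_vector_derivative exp (\<mu> * (A + t * (B - A))) * \<bar>B - A\<bar>) (at t within {0..1})" for t
  proof -
    have "(F has_real_derivative exp (\<mu> * (A + t * (B - A))) * (\<mu> * (B - A)) * \<bar>B - A\<bar> / (\<mu> * (B - A)))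
        (at t within {0..1})"
      unfolding F_def by (auto intro!: derivative_eq_intros)
    then show ?thesis
      using False assms by (simp add: has_real_derivative_iff_has_vector_derivative)
  qed
  then have "((\<lambda>t. exp (\<mu> * (A + t * (B - A))) * \<bar>B - A\<bar>) has_integral F 1 - F 0) {0..1}"
    by (intro fundamental_theorem_of_calculus) auto
  moreover have "F 1 - F 0 = \<bar>exp (\<mu> * B) - exp (\<mu> * A)\<bar> / \<mu>"
  proof (cases "A < B")
    case True
    then have "exp (\<mu> * A) < exp (\<mu> * B)" using assms by simp
    then show ?thesis using True assms by (simp add: F_def diff_divide_distrib)
  next
    case False
    then have "B < A" using \<open>B \<noteq> A\<close> by simp
    have "F t = - exp (\<mu> * (A + t * (B - A))) / \<mu>" for t
    proof -
      have "\<And>X D m :: real. D \<noteq> 0 \<Longrightarrow> m \<noteq> 0 \<Longrightarrow> X * (- D) / (m * D) = - X / m"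
        by (simp add: field_simps)
      moreover have "\<bar>B - A\<bar> = - (B - A)" "B - A \<noteq> 0" "\<mu> \<noteq> 0" using \<open>B < A\<close> assms by auto
      ultimately show ?thesis unfolding F_def by metis
    qed
    moreover have "exp (\<mu> * B) < exp (\<mu> * A)" using \<open>B < A\<close> assms by simp
    ultimately show ?thesis by (simp add: diff_divide_distrib)
  qed
  ultimately show ?thesis by simp
qed

lemma closed_segment_subset_half_strip:
  assumes "Re a \<le> - R" "\<bar>Im a\<bar> \<le> M" "Re b \<le> - R" "\<bar>Im b\<bar> \<le> M"
  shows "closed_segment a b \<subseteq> {s. Re s \<le> - R \<and> \<bar>Im s\<bar> \<le> M}"
proof (rule closed_segment_subset)
  have "{s. Re s \<le> - R \<and> \<bar>Im s\<bar> \<le> M} = {s. Re s \<le> - R} \<inter> {s. Im s \<le> M} \<inter> {s. Im s \<ge> - M}"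
    by auto
  then show "convex {s. Re s \<le> - R \<and> \<bar>Im s\<bar> \<le> M}"
    by (simp add: convex_Int convex_halfspace_Re_le convex_halfspace_Im_le convex_halfspace_Im_ge)
qed (use assms in auto)

text \<open>The endpoints of the segment may drift apart arbitrarily fast, so a uniform bound times the
  length does not suffice; the decay along the segment must be integrated.\<close>
lemma norm_contour_integral_linepath_exp_le:
  fixes g :: "complex \<Rightarrow> complex" and \<mu> M R :: real
  assumes \<mu>: "\<mu> > 0"
    and bound: "\<And>s. Re s \<le> - R \<Longrightarrow> \<bar>Im s\<bar> \<le> M \<Longrightarrow> norm (g s) \<le> exp (\<mu> * Re s)"
    and a: "Re a \<le> - R" "\<bar>Im a\<bar> \<le> M" and b: "Re b \<le> - R" "\<bar>Im b\<bar> \<le> M"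
    and int: "g contour_integrable_on linepath a b"
  shows "norm (contour_integral (linepath a b) g) \<le> (1 / \<mu> + 2 * M) * exp (\<mu> * max (Re a) (Re b))"
proof -
  define A where "A = Re a"
  define B where "B = Re b"
  define E where "E = exp (\<mu> * max A B)"
  define \<psi> where "\<psi> t = exp (\<mu> * (A + t * (B - A))) * \<bar>B - A\<bar> + 2 * M * E" for t
  have M: "M \<ge> 0" using a by linarith
  have g_int: "((\<lambda>t. g (linepath a b t) * (b - a)) has_integral contour_integral (linepath a b) g) {0..1}"
    using has_contour_integral_integral[OF int] has_contour_integral_linepath by blast
  have \<psi>_int: "(\<psi> has_integral (\<bar>exp (\<mu> * B) - exp (\<mu> * A)\<bar> / \<mu> + 2 * M * E)) {0..1}"
    unfolding \<psi>_def
    by (intro has_integral_add has_integral_exp_affine \<mu>) (use has_integral_const_real[of "2 * M * E" 0 1] in simp)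
  have bound_\<psi>: "norm (g (linepath a b t) * (b - a)) \<le> \<psi> t" if t: "t \<in> {0..1}" for t
  proof -
    have re: "Re (linepath a b t) = A + t * (B - A)"
      by (simp add: linepath_def A_def B_def algebra_simps)
    have "(1 - t) * A + t * B \<le> max A B"
      using t by (intro convex_bound_le) auto
    then have "Re (linepath a b t) \<le> max A B"
      by (simp add: linepath_def A_def B_def)
    moreover have "Re (linepath a b t) \<le> - R \<and> \<bar>Im (linepath a b t)\<bar> \<le> M"
      using closed_segment_subset_half_strip[OF a b] linepath_in_path[OF t] by blast
    ultimately have g_le: "norm (g (linepath a b t)) \<le> exp (\<mu> * (A + t * (B - A)))"
      and exp_le: "exp (\<mu> * (A + t * (B - A))) \<le> E"
      using bound[of "linepath a b t"] \<mu> unfolding re by (auto simp: E_def)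
    have "norm (b - a) \<le> \<bar>B - A\<bar> + 2 * M"
      using cmod_le[of "b - a"] a b by (simp add: A_def B_def)
    then have "norm (g (linepath a b t) * (b - a)) \<le> exp (\<mu> * (A + t * (B - A))) * (\<bar>B - A\<bar> + 2 * M)"
      unfolding norm_mult using g_le by (intro mult_mono) auto
    also have "\<dots> \<le> \<psi> t"
      unfolding \<psi>_def using mult_left_mono[OF exp_le M] by (simp add: algebra_simps)
    finally show ?thesis .
  qed
  have "norm (contour_integral (linepath a b) g)
      = norm (integral {0..1} (\<lambda>t. g (linepath a b t) * (b - a)))"
    using integral_unique[OF g_int] by simp
  also have "\<dots> \<le> integral {0..1} \<psi>"
    by (rule integral_norm_bound_integral)
      (use g_int \<psi>_int bound_\<psi> in \<open>auto intro: has_integral_integrable\<close>)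
  also have "\<dots> = \<bar>exp (\<mu> * B) - exp (\<mu> * A)\<bar> / \<mu> + 2 * M * E"
    using integral_unique[OF \<psi>_int] .
  also have "\<dots> \<le> E / \<mu> + 2 * M * E"
  proof -
    have "exp (\<mu> * A) \<le> E" "exp (\<mu> * B) \<le> E" using \<mu> by (auto simp: E_def)
    moreover have "0 < exp (\<mu> * A)" "0 < exp (\<mu> * B)" by auto
    ultimately have "\<bar>exp (\<mu> * B) - exp (\<mu> * A)\<bar> \<le> E" by linarith
    then show ?thesis using \<mu> by (simp add: divide_right_mono)
  qed
  finally show ?thesis by (simp add: E_def A_def B_def algebra_simps)
qed

lemma hankel_piece_residue_theorem:
  fixes g :: "complex \<Rightarrow> complex"
  assumes A: "finite A" and holo: "g holomorphic_on UNIV - A"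
    and valid: "valid_path (hankel_piece \<gamma> T)"
    and piece: "path_image (hankel_piece \<gamma> T) \<inter> A = {}"
    and segment: "closed_segment (\<gamma> T) (\<gamma> (- T)) \<inter> A = {}"
    and wind: "\<forall>a\<in>A. winding_number (hankel_piece \<gamma> T +++ linepath (\<gamma> T) (\<gamma> (- T))) a = 1"
  shows "contour_integral (hankel_piece \<gamma> T) g + contour_integral (linepath (\<gamma> T) (\<gamma> (- T))) g
           = 2 * pi * \<i> * (\<Sum>a\<in>A. residue g a)"
proof -
  define pc where "pc = hankel_piece \<gamma> T"
  define sg where "sg = linepath (\<gamma> T) (\<gamma> (- T))"
  have ends: "pathfinish pc = \<gamma> T" "pathstart pc = \<gamma> (- T)"
    by (simp_all add: pc_def pathfinish_def pathstart_def hankel_piece_def)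
  have "open (UNIV - A)" using A by (simp add: finite_imp_closed open_Diff)
  moreover have "path_image pc \<subseteq> UNIV - A" "path_image sg \<subseteq> UNIV - A"
    using piece segment by (auto simp: pc_def sg_def)
  moreover have "valid_path pc" "valid_path sg" using valid by (simp_all add: pc_def sg_def)
  ultimately have "g contour_integrable_on pc" "g contour_integrable_on sg"
    using contour_integrable_holomorphic_simple[OF holo] by blast+
  moreover have "contour_integral (pc +++ sg) g = 2 * pi * \<i> * (\<Sum>a\<in>A. residue g a)"
  proof -
    have "contour_integral (pc +++ sg) g = 2 * pi * \<i> * (\<Sum>a\<in>A. winding_number (pc +++ sg) a * residue g a)"
      using \<open>valid_path pc\<close> \<open>valid_path sg\<close> \<open>path_image pc \<subseteq> UNIV - A\<close> \<open>path_image sg \<subseteq> UNIV - A\<close>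
        path_image_join_subset[of pc sg] ends
      by (intro Residue_theorem[OF open_UNIV connected_UNIV A holo]) (auto simp: sg_def)
    then show ?thesis using wind by (simp add: pc_def sg_def)
  qed
  ultimately show ?thesis
    using \<open>valid_path pc\<close> \<open>valid_path sg\<close> ends by (simp add: pc_def sg_def)
qed

lemma eventually_Re_ends_le:
  fixes \<gamma> :: "real \<Rightarrow> complex"
  assumes "filterlim (\<lambda>t. Re (\<gamma> t)) at_bot at_top" and "filterlim (\<lambda>t. Re (\<gamma> t)) at_bot at_bot"
  shows "eventually (\<lambda>T. Re (\<gamma> T) \<le> Z \<and> Re (\<gamma> (- T)) \<le> Z) at_top"
proof -
  have "eventually (\<lambda>T. Re (\<gamma> T) \<le> Z) at_top" using assms(1) by (simp add: filterlim_at_bot)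
  moreover have "eventually (\<lambda>T. Re (\<gamma> (- T)) \<le> Z) at_top"
  proof -
    have "eventually (\<lambda>t. Re (\<gamma> t) \<le> Z) at_bot" using assms(2) by (simp add: filterlim_at_bot)
    then obtain N where N: "\<And>t. t \<le> N \<Longrightarrow> Re (\<gamma> t) \<le> Z"
      unfolding eventually_at_bot_linorder by blast
    show ?thesis using eventually_ge_at_top[of "- N"] by eventually_elim (auto intro: N)
  qed
  ultimately show ?thesis by eventually_elim auto
qed

lemma contour_integral_chord_tendsto_0:
  fixes \<gamma> :: "real \<Rightarrow> complex" and g :: "complex \<Rightarrow> complex"
  assumes ends: "filterlim (\<lambda>t. Re (\<gamma> t)) at_bot at_top" "filterlim (\<lambda>t. Re (\<gamma> t)) at_bot at_bot"
    and M: "\<And>t. \<bar>Im (\<gamma> t)\<bar> \<le> M" and \<mu>: "\<mu> > 0"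
    and R: "\<And>s. Re s \<le> - R \<Longrightarrow> \<bar>Im s\<bar> \<le> M \<Longrightarrow> norm (g s) \<le> exp (\<mu> * Re s)"
    and int: "eventually (\<lambda>T. g contour_integrable_on linepath (\<gamma> T) (\<gamma> (- T))) at_top"
  shows "((\<lambda>T. contour_integral (linepath (\<gamma> T) (\<gamma> (- T))) g) \<longlongrightarrow> 0) at_top"
proof -
  define B where "B T = (1 / \<mu> + 2 * M) * exp (\<mu> * max (Re (\<gamma> T)) (Re (\<gamma> (- T))))" for T
  have "filterlim (\<lambda>T. \<mu> * max (Re (\<gamma> T)) (Re (\<gamma> (- T)))) at_bot at_top"
    unfolding filterlim_at_bot
  proof
    fix Z
    show "eventually (\<lambda>T. \<mu> * max (Re (\<gamma> T)) (Re (\<gamma> (- T))) \<le> Z) at_top"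
      using eventually_Re_ends_le[OF ends, of "Z / \<mu>"]
      by eventually_elim (use \<mu> in \<open>auto simp: field_simps\<close>)
  qed
  from filterlim_compose[OF exp_at_bot this] have "(B \<longlongrightarrow> 0) at_top"
    unfolding B_def by (rule tendsto_mult_right_zero)
  moreover have "eventually (\<lambda>T. norm (contour_integral (linepath (\<gamma> T) (\<gamma> (- T))) g) \<le> B T) at_top"
    using eventually_Re_ends_le[OF ends, of "- R"] int
    by eventually_elim (auto simp: B_def intro!: norm_contour_integral_linepath_exp_le[OF \<mu>] R M)
  ultimately show ?thesis
    by (rule Lim_null_comparison[rotated])
qed

lemma hankel_contour_integral_tendsto_residues:
  fixes g :: "complex \<Rightarrow> complex"
  assumes \<gamma>: "hankel_contour \<gamma>"
    and A: "finite A" "A \<subseteq> complex_of_real ` {..0}"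
    and holo: "g holomorphic_on UNIV - A"
    and \<mu>: "\<mu> > 0"
    and decay: "\<And>M. \<exists>R. \<forall>s. Re s \<le> - R \<longrightarrow> \<bar>Im s\<bar> \<le> M \<longrightarrow> norm (g s) \<le> exp (\<mu> * Re s)"
  shows "((\<lambda>T. contour_integral (hankel_piece \<gamma> T) g) \<longlongrightarrow> 2 * pi * \<i> * (\<Sum>a\<in>A. residue g a)) at_top"
proof -
  have valid: "\<And>T. T > 0 \<Longrightarrow> valid_path (hankel_piece \<gamma> T)"
    and avoid: "\<And>t. \<gamma> t \<notin> complex_of_real ` {..0}"
    and ends: "filterlim (\<lambda>t. Re (\<gamma> t)) at_bot at_top" "filterlim (\<lambda>t. Re (\<gamma> t)) at_bot at_bot"
    and "bounded (range (\<lambda>t. Im (\<gamma> t)))"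
    and wind: "\<And>z::real. z \<le> 0 \<Longrightarrow> eventually (\<lambda>T. winding_number
                 (hankel_piece \<gamma> T +++ linepath (\<gamma> T) (\<gamma> (- T))) (complex_of_real z) = 1) at_top"
    using \<gamma> unfolding hankel_contour_def by auto
  then obtain M where M: "\<And>t. \<bar>Im (\<gamma> t)\<bar> \<le> M" unfolding bounded_iff by auto
  obtain R where R: "\<And>s. Re s \<le> - R \<Longrightarrow> \<bar>Im s\<bar> \<le> M \<Longrightarrow> norm (g s) \<le> exp (\<mu> * Re s)"
    using decay[of M] by blast
  define D where "D = 1 + (\<Sum>a\<in>A. \<bar>Re a\<bar>)"
  have D: "- D < Re a" if "a \<in> A" for a
    using member_le_sum[of a A "\<lambda>a. \<bar>Re a\<bar>"] that A(1) by (auto simp: D_def)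
  define chord where "chord T = contour_integral (linepath (\<gamma> T) (\<gamma> (- T))) g" for T
  have "eventually (\<lambda>T. \<forall>a\<in>A. winding_number (hankel_piece \<gamma> T +++ linepath (\<gamma> T) (\<gamma> (- T))) a = 1)
      at_top"
    using A wind by (intro eventually_ball_finite) auto
  then have key: "eventually (\<lambda>T. g contour_integrable_on linepath (\<gamma> T) (\<gamma> (- T)) \<and>
      contour_integral (hankel_piece \<gamma> T) g = 2 * pi * \<i> * (\<Sum>a\<in>A. residue g a) - chord T) at_top"
    using eventually_Re_ends_le[OF ends, of "- D"] eventually_gt_at_top[of 0]
  proof eventually_elim
    case (elim T)
    then have "closed_segment (\<gamma> T) (\<gamma> (- T)) \<subseteq> {s. Re s \<le> - D \<and> \<bar>Im s\<bar> \<le> M}"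
      by (intro closed_segment_subset_half_strip) (auto intro: M)
    then have segment: "closed_segment (\<gamma> T) (\<gamma> (- T)) \<inter> A = {}" using D by force
    have "path_image (hankel_piece \<gamma> T) \<subseteq> range \<gamma>"
      by (auto simp: path_image_def hankel_piece_def)
    then have piece: "path_image (hankel_piece \<gamma> T) \<inter> A = {}" using avoid A(2) by blast
    have "g contour_integrable_on linepath (\<gamma> T) (\<gamma> (- T))"
      using segment A(1)
      by (intro contour_integrable_holomorphic_simple[OF holo]) (auto simp: finite_imp_closed open_Diff)
    with hankel_piece_residue_theorem[OF A(1) holo valid piece segment] elim show ?case
      by (auto simp: chord_def algebra_simps)
  qed
  have "eventually (\<lambda>T. g contour_integrable_on linepath (\<gamma> T) (\<gamma> (- T))) at_top"
    using key by eventually_elim auto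
  then have "(chord \<longlongrightarrow> 0) at_top"
    unfolding chord_def using contour_integral_chord_tendsto_0[OF ends M \<mu> R] by simp
  then have "((\<lambda>T. 2 * pi * \<i> * (\<Sum>a\<in>A. residue g a) - chord T)
      \<longlongrightarrow> 2 * pi * \<i> * (\<Sum>a\<in>A. residue g a)) at_top"
    using tendsto_diff[OF tendsto_const] by fastforce
  then show ?thesis
    by (rule Lim_transform_eventually) (use key in \<open>eventually_elim, auto\<close>)
qed

section \<open>The integrand\<close>

text \<open>By \<open>\<Gamma>(x+s+1) = (s)_(x+1) \<Gamma>(s)\<close> this agrees with the integrand of the theorem away from the
  nonpositive integers, and its only poles are \<open>0, -1, \<dots>, -x\<close>.\<close>
definition meixner2_kernel ::
    "nat \<Rightarrow> (nat \<Rightarrow> real) \<Rightarrow> real \<Rightarrow> (nat \<Rightarrow> nat) \<Rightarrow> nat \<Rightarrow> complex \<Rightarrow> complex" where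
  "meixner2_kernel p \<beta> c n x s =
     (\<Prod>j<p. pochhammer (complex_of_real (\<beta> j) - s) (n j))
       / (complex_of_real (1 - c) powr s * pochhammer s (Suc x))"

lemma Gamma_integrand_eq_meixner2_kernel:
  assumes "s \<notin> \<int>\<^sub>\<le>\<^sub>0"
  shows "Gamma s / complex_of_real (1 - c) powr s * (\<Prod>j<p. pochhammer (complex_of_real (\<beta> j) - s) (n j))
           / Gamma (of_nat x + s + 1) = meixner2_kernel p \<beta> c n x s"
proof -
  have "Gamma s \<noteq> 0" using assms by (simp add: Gamma_eq_zero_iff)
  moreover have "Gamma (of_nat x + s + 1) = pochhammer s (Suc x) * Gamma s"
    using pochhammer_Gamma[OF assms, of "Suc x"] \<open>Gamma s \<noteq> 0\<close> by (simp add: add_ac)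
  ultimately show ?thesis by (simp add: meixner2_kernel_def field_simps)
qed

lemma meixner2_kernel_holomorphic:
  assumes "c < 1"
  shows "meixner2_kernel p \<beta> c n x holomorphic_on UNIV - (\<lambda>k. - of_nat k) ` {..x}"
proof -
  have "pochhammer s (Suc x) \<noteq> 0" if "s \<notin> (\<lambda>k. - of_nat k) ` {..x}" for s :: complex
    using that by (auto simp: pochhammer_eq_0_iff less_Suc_eq_le)
  moreover have "complex_of_real (1 - c) powr s \<noteq> 0" for s
    using assms by (simp add: powr_def)
  ultimately show ?thesis
    unfolding meixner2_kernel_def[abs_def]
    by (intro holomorphic_intros holomorphic_on_powr_right) (use assms in \<open>auto simp: pochhammer_prod\<close>)
qed

lemma prod_of_nat_diff_remove:
  assumes "k \<le> x"
  shows "(\<Prod>m\<in>{..x} - {k}. of_nat m - of_nat k :: 'a :: {comm_ring_1, ring_char_0}) = (-1) ^ k * fact k * fact (x - k)"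
proof -
  have split: "{..x} - {k} = {..<k} \<union> {Suc k..x}" using assms by auto
  have lower: "(\<Prod>m<k. of_nat m - of_nat k :: 'a) = (-1) ^ k * fact k"
  proof -
    have "(\<Prod>m<k. of_nat m - of_nat k :: 'a) = (\<Prod>m<k. - of_nat (k - m))"
      by (intro prod.cong refl) (simp add: of_nat_diff)
    also have "\<dots> = (-1) ^ k * fact k"
      by (simp only: prod_uminus card_lessThan) (simp add: fact_prod_rev atLeast0LessThan of_nat_prod)
    finally show ?thesis .
  qed
  have upper: "(\<Prod>m\<in>{Suc k..x}. of_nat m - of_nat k :: 'a) = fact (x - k)"
  proof -
    have "(\<Prod>m\<in>{Suc k..x}. of_nat m - of_nat k :: 'a) = (\<Prod>m\<in>{Suc k..x}. of_nat (m - k))"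
      by (intro prod.cong refl) (simp add: of_nat_diff)
    also have "\<dots> = (\<Prod>i\<in>{1..x-k}. of_nat (i + k - k))"
      using prod.shift_bounds_cl_nat_ivl[of "\<lambda>m. of_nat (m - k) :: 'a" 1 k "x - k"] assms by simp
    finally show ?thesis by (simp add: fact_prod of_nat_prod)
  qed
  show ?thesis unfolding split by (subst prod.union_disjoint) (auto simp: lower upper)
qed

lemma residue_meixner2_kernel:
  assumes c: "c < 1" and k: "k \<le> x"
  shows "residue (meixner2_kernel p \<beta> c n x) (- of_nat k) =
     of_real ((\<Prod>j<p. pochhammer (\<beta> j + real k) (n j)) * (c - 1) ^ k / (fact k * fact (x - k)))"
proof -
  define h where "h w = (\<Prod>j<p. pochhammer (complex_of_real (\<beta> j) - w) (n j))
                          / complex_of_real (1 - c) powr w" for w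
  define R where "R w = (\<Prod>m\<in>{..x} - {k}. w + of_nat m)" for w :: complex
  define U where "U = UNIV - (\<lambda>m. - of_nat m :: complex) ` ({..x} - {k})"
  have U: "open U" "- of_nat k \<in> U" unfolding U_def by (auto intro!: open_Diff finite_imp_closed)
  have "R w \<noteq> 0" if "w \<in> U" for w
    using that by (force simp: R_def U_def image_iff add_eq_0_iff)
  then have holo: "(\<lambda>w. h w / R w) holomorphic_on U"
    unfolding h_def R_def
    by (intro holomorphic_intros holomorphic_on_powr_right) (use c in \<open>auto simp: R_def powr_def\<close>)
  have kernel: "meixner2_kernel p \<beta> c n x = (\<lambda>w. h w / R w / (w - (- of_nat k)))"
  proof
    fix w :: complex
    have "pochhammer w (Suc x) = (\<Prod>m\<in>{..x}. w + of_nat m)"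
      by (simp add: pochhammer_prod atLeast0LessThan lessThan_Suc_atMost)
    also have "\<dots> = (w + of_nat k) * R w"
      unfolding R_def using k by (subst prod.remove[of _ k]) auto
    finally show "meixner2_kernel p \<beta> c n x w = h w / R w / (w - (- of_nat k))"
      by (simp add: meixner2_kernel_def h_def field_simps)
  qed
  have "residue (meixner2_kernel p \<beta> c n x) (- of_nat k) = h (- of_nat k) / R (- of_nat k)"
    unfolding kernel by (rule residue_simple[OF U holo])
  moreover have "R (- of_nat k) = (-1) ^ k * fact k * fact (x - k)"
    unfolding R_def using prod_of_nat_diff_remove[OF k] by (simp add: algebra_simps)
  moreover have "h (- of_nat k) = of_real ((\<Prod>j<p. pochhammer (\<beta> j + real k) (n j)) * (1 - c) ^ k)"
  proof -
    have "complex_of_real (1 - c) powr (- of_nat k) = of_real ((1 - c) powr (- real k))"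
      using c powr_of_real[of "1 - c" "- real k"] by simp
    also have "(1 - c) powr (- real k) = 1 / (1 - c) ^ k"
      using c by (simp add: powr_minus_divide powr_realpow)
    finally show ?thesis
      using c by (simp add: h_def pochhammer_of_real[symmetric] field_simps)
  qed
  moreover have "(1 - c) ^ k = (-1) ^ k * (c - 1) ^ k"
    by (metis minus_diff_eq power_minus)
  ultimately show ?thesis by (simp add: field_simps)
qed

lemma norm_pochhammer_le: "norm (pochhammer (z :: complex) m) \<le> (norm z + real m) ^ m"
proof -
  have "norm (pochhammer z m) \<le> (\<Prod>l<m. norm (z + of_nat l))"
    unfolding pochhammer_prod atLeast0LessThan by (rule norm_prod_le)
  also have "\<dots> \<le> (\<Prod>l<m. norm z + real m)"
  proof (intro prod_mono conjI norm_ge_zero)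
    fix l assume "l \<in> {..<m}"
    then show "norm (z + of_nat l) \<le> norm z + real m"
      using norm_triangle_ineq[of z "of_nat l"] by simp
  qed
  finally show ?thesis by simp
qed

lemma norm_prod_pochhammer_le:
  fixes \<beta> :: "nat \<Rightarrow> real" and n :: "nat \<Rightarrow> nat"
  shows "norm (\<Prod>j<p. pochhammer (complex_of_real (\<beta> j) - s) (n j))
     \<le> ((\<Sum>j<p. \<bar>\<beta> j\<bar> + real (n j)) + norm s) ^ (\<Sum>j<p. n j)"
proof -
  define K where "K = (\<Sum>j<p. \<bar>\<beta> j\<bar> + real (n j))"
  have "norm (\<Prod>j<p. pochhammer (complex_of_real (\<beta> j) - s) (n j))
      \<le> (\<Prod>j<p. norm (pochhammer (complex_of_real (\<beta> j) - s) (n j)))"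
    by (rule norm_prod_le)
  also have "\<dots> \<le> (\<Prod>j<p. (K + norm s) ^ n j)"
  proof (intro prod_mono conjI norm_ge_zero)
    fix j assume "j \<in> {..<p}"
    then have "\<bar>\<beta> j\<bar> + real (n j) \<le> K"
      unfolding K_def by (intro member_le_sum) auto
    moreover have "norm (complex_of_real (\<beta> j) - s) \<le> \<bar>\<beta> j\<bar> + norm s"
      using norm_triangle_ineq4[of "complex_of_real (\<beta> j)" s] by simp
    ultimately have "(norm (complex_of_real (\<beta> j) - s) + real (n j)) ^ n j \<le> (K + norm s) ^ n j"
      by (intro power_mono) auto
    then show "norm (pochhammer (complex_of_real (\<beta> j) - s) (n j)) \<le> (K + norm s) ^ n j"
      using norm_pochhammer_le order.trans by blast
  qed
  finally show ?thesis by (simp add: K_def power_sum)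
qed

lemma norm_pochhammer_ge_1:
  assumes "Re s + real x \<le> - 1"
  shows "1 \<le> norm (pochhammer s (Suc x))"
proof -
  have "1 \<le> norm (s + of_nat i)" if "i \<le> x" for i
    using that assms abs_Re_le_cmod[of "s + of_nat i"] by auto
  then have "1 \<le> (\<Prod>i<Suc x. norm (s + of_nat i))"
    by (intro prod_ge_1) auto
  then show ?thesis by (simp add: pochhammer_prod atLeast0LessThan prod_norm)
qed

text \<open>In a half-strip to the left the numerator grows polynomially and \<open>|(s)_(x+1)| \<ge> 1\<close>,
  while \<open>|(1-c)^s| = exp (- ln (1-c) |Re s|)\<close> grows exponentially.\<close>
lemma meixner2_kernel_decay:
  assumes c: "0 < c" "c < 1"
  shows "\<exists>R. \<forall>s. Re s \<le> - R \<longrightarrow> \<bar>Im s\<bar> \<le> M \<longrightarrow>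
            norm (meixner2_kernel p \<beta> c n x s) \<le> exp ((- ln (1 - c) / 2) * Re s)"
proof -
  define lam where "lam = - ln (1 - c)"
  have "lam > 0" using c by (simp add: lam_def)
  define K where "K = (\<Sum>j<p. \<bar>\<beta> j\<bar> + real (n j))"
  define N where "N = (\<Sum>j<p. n j)"
  have "K \<ge> 0" unfolding K_def by (intro sum_nonneg) auto
  have "((\<lambda>u::real. (K + M + u) ^ N * exp (- (lam / 2) * u)) \<longlongrightarrow> 0) at_top"
    using \<open>lam > 0\<close> by real_asymp
  then have "eventually (\<lambda>u. (K + M + u) ^ N * exp (- (lam / 2) * u) < 1) at_top"
    by (rule order_tendstoD(2)) simp
  then obtain U where U: "\<And>u. u \<ge> U \<Longrightarrow> (K + M + u) ^ N * exp (- (lam / 2) * u) < 1"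
    by (auto simp: eventually_at_top_linorder)
  show ?thesis
  proof (intro exI[of _ "max U (real x + 1)"] allI impI)
    fix s :: complex
    assume re: "Re s \<le> - max U (real x + 1)" and im: "\<bar>Im s\<bar> \<le> M"
    define u where "u = - Re s"
    have u: "u \<ge> U" "u \<ge> real x + 1" and "M \<ge> 0" using re im by (auto simp: u_def)
    have "norm s \<le> M + u" using cmod_le[of s] im u by (simp add: u_def)
    then have "(K + norm s) ^ N \<le> (K + M + u) ^ N"
      using \<open>K \<ge> 0\<close> by (intro power_mono) auto
    then have numerator: "norm (\<Prod>j<p. pochhammer (complex_of_real (\<beta> j) - s) (n j)) \<le> (K + M + u) ^ N"
      using norm_prod_pochhammer_le[where p = p and \<beta> = \<beta> and s = s and n = n] unfolding K_def N_def by linarith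
    have "norm (complex_of_real (1 - c) powr s) = (1 - c) powr Re s"
      using c by (subst norm_powr_real_powr) auto
    also have "\<dots> = exp (lam * u)" using c by (simp add: powr_def lam_def u_def)
    finally have "norm (meixner2_kernel p \<beta> c n x s)
        = norm (\<Prod>j<p. pochhammer (complex_of_real (\<beta> j) - s) (n j))
          / (exp (lam * u) * norm (pochhammer s (Suc x)))"
      by (simp add: meixner2_kernel_def norm_divide norm_mult)
    also have "\<dots> \<le> (K + M + u) ^ N / exp (lam * u)"
      using norm_pochhammer_ge_1[of s x] numerator \<open>K \<ge> 0\<close> \<open>M \<ge> 0\<close> u
      by (intro frac_le) (auto simp: u_def intro: order.trans[OF _ mult_left_mono[of 1]])
    also have "\<dots> = ((K + M + u) ^ N * exp (- (lam / 2) * u)) * exp (- (lam / 2) * u)"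
      by (simp add: exp_minus field_simps flip: exp_add)
    also have "\<dots> \<le> exp (- (lam / 2) * u)"
      using U[OF u(1)] \<open>K \<ge> 0\<close> \<open>M \<ge> 0\<close> u by (intro mult_left_le_one_le) auto
    finally show "norm (meixner2_kernel p \<beta> c n x s) \<le> exp ((- ln (1 - c) / 2) * Re s)"
      by (simp add: lam_def u_def)
  qed
qed

lemma sum_residues_meixner2_kernel:
  assumes "c < 1"
  shows "(\<Sum>a\<in>(\<lambda>k. - of_nat k) ` {..x}. residue (meixner2_kernel p \<beta> c n x) a)
     = of_real ((\<Sum>k\<le>x. real (x choose k) * (c - 1) ^ k * (\<Prod>j<p. pochhammer (\<beta> j + real k) (n j)))
                / fact x)"
proof -
  have "(\<Sum>a\<in>(\<lambda>k. - of_nat k) ` {..x}. residue (meixner2_kernel p \<beta> c n x) a)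
      = (\<Sum>k\<le>x. residue (meixner2_kernel p \<beta> c n x) (- of_nat k))"
    by (subst sum.reindex) (auto simp: inj_on_def)
  also have "\<dots> = (\<Sum>k\<le>x. of_real (real (x choose k) * (c - 1) ^ k
                       * (\<Prod>j<p. pochhammer (\<beta> j + real k) (n j)) / fact x))"
    by (intro sum.cong refl) (simp add: residue_meixner2_kernel assms binomial_fact field_simps)
  finally show ?thesis by (simp add: sum_divide_distrib)
qed

lemma contour_integral_Gamma_integrand_hankel_piece:
  assumes "hankel_contour \<gamma>"
  shows "contour_integral (hankel_piece \<gamma> T)
           (\<lambda>s. Gamma s / complex_of_real (1 - c) powr s
                * (\<Prod>j<p. pochhammer (complex_of_real (\<beta> j) - s) (n j)) / Gamma (of_nat x + s + 1))
         = contour_integral (hankel_piece \<gamma> T) (meixner2_kernel p \<beta> c n x)"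
proof (rule contour_integral_eq, rule Gamma_integrand_eq_meixner2_kernel)
  fix s assume "s \<in> path_image (hankel_piece \<gamma> T)"
  then obtain t where "s = \<gamma> t" by (auto simp: path_image_def hankel_piece_def)
  then have "s \<notin> complex_of_real ` {..0}" using assms by (simp add: hankel_contour_def)
  then show "s \<notin> \<int>\<^sub>\<le>\<^sub>0"
    by (auto elim!: nonpos_Ints_cases intro!: image_eqI[of _ _ "real_of_int _"])
qed

theorem mainTheorem7:
  fixes p :: nat and \<beta> :: "nat \<Rightarrow> real" and c :: real and n :: "nat \<Rightarrow> nat"
    and P :: "real poly" and \<gamma> :: "real \<Rightarrow> complex" and x :: nat
  assumes c: "0 < c" "c < 1"
    and \<beta>pos: "\<And>i. i < p \<Longrightarrow> \<beta> i > 0"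
    and \<beta>nonint: "\<And>i j. i < p \<Longrightarrow> j < p \<Longrightarrow> i \<noteq> j \<Longrightarrow> \<beta> i - \<beta> j \<notin> \<int>"
    and P: "is_meixner2_typeII p \<beta> c n P"
    and \<gamma>: "hankel_contour \<gamma>"
  shows "\<exists>I. ((\<lambda>T. contour_integral (hankel_piece \<gamma> T)
                 (\<lambda>s. Gamma s / (complex_of_real (1 - c)) powr s
                      * (\<Prod>j<p. pochhammer (complex_of_real (\<beta> j) - s) (n j))
                      / Gamma (of_nat x + s + 1))) \<longlongrightarrow> I) at_top
           \<and> complex_of_real (poly P (real x))
               = (complex_of_real c / (complex_of_real c - 1)) ^ (\<Sum>i<p. n i)
                 * complex_of_real (Gamma (real x + 1) / c ^ x) * I / (2 * complex_of_real pi * \<i>)"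
proof (intro exI conjI)
  define S where "S = (\<Sum>k\<le>x. real (x choose k) * (c - 1) ^ k * (\<Prod>j<p. pochhammer (\<beta> j + real k) (n j)))"
  have "(\<lambda>k. - of_nat k :: complex) ` {..x} \<subseteq> complex_of_real ` {..0}"
    by (auto intro!: image_eqI[of _ _ "- real _"])
  then have "((\<lambda>T. contour_integral (hankel_piece \<gamma> T) (meixner2_kernel p \<beta> c n x))
      \<longlongrightarrow> 2 * pi * \<i> * of_real (S / fact x)) at_top"
    using hankel_contour_integral_tendsto_residues[OF \<gamma> _ _ meixner2_kernel_holomorphic
        _ meixner2_kernel_decay] c
    by (simp add: sum_residues_meixner2_kernel S_def)
  then show "((\<lambda>T. contour_integral (hankel_piece \<gamma> T)
                 (\<lambda>s. Gamma s / (complex_of_real (1 - c)) powr s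
                      * (\<Prod>j<p. pochhammer (complex_of_real (\<beta> j) - s) (n j))
                      / Gamma (of_nat x + s + 1))) \<longlongrightarrow> 2 * pi * \<i> * of_real (S / fact x)) at_top"
    unfolding contour_integral_Gamma_integrand_hankel_piece[OF \<gamma>] .
  have "Gamma (real x + 1) = fact x" using Gamma_fact[of x] by (simp add: add.commute)
  moreover have "poly P (real x) = (c / (c - 1)) ^ (\<Sum>i<p. n i) * (fact x / c ^ x) * (S / fact x)"
    using meixner2_typeII_explicit[OF c \<beta>pos \<beta>nonint P, of x] by (simp add: S_def)
  ultimately show "complex_of_real (poly P (real x))
      = (complex_of_real c / (complex_of_real c - 1)) ^ (\<Sum>i<p. n i)
        * complex_of_real (Gamma (real x + 1) / c ^ x) * (2 * pi * \<i> * of_real (S / fact x))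
        / (2 * complex_of_real pi * \<i>)"
    by simp
qed

end
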